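(* For all $(t,\theta,a,\ell)$ with $t>0$, $a,\ell>0$ and $|\theta|\le at/2$ we have $$at\lesssim\tilde R\lesssim p+at,$$ $$|\partial_\theta\tilde R-1|\lesssim\frac p{at},\qquad|\partial_a\tilde R-t|\lesssim\Big\langle\frac pa\Big\rangle\ln\langle t\rangle,$$ $$|\partial_\theta^2\tilde R|\lesssim\frac p{a^2t^2},\qquad|\partial^2_{a\theta}\tilde R|\lesssim\frac p{a^2t},\qquad|\partial_a^2\tilde R|\lesssim\frac1a\Big\langle\frac pa\Big\rangle\ln\langle t\rangle,$$ where $p=p(a,\ell)$ and all derivatives are taken with respect to the variables $(\theta,a)$ of $\tilde R(t,\theta,a,\ell)=R(\theta+at,a,\ell)$.
   Context: Fix $m>0$. For $a,\ell>0$: $\kappa(a,\ell)=(1+4a^2\ell/m^2)^{-1/2}$, $p(a,\ell)=\frac{m}{2a^2\kappa(a,\ell)}$. For $\kappa\in(0,1)$, $G_\kappa(x)=\sqrt{x^2-1}-\kappa\ln(x+\sqrt{x^2-1})$ on $[1,\infty)$, $H_\kappa=G_\kappa^{-1}:[0,\infty)\to[1,\infty)$. $R(\theta,a,\ell)=pH_\kappa(|\theta|/p)-p\kappa$ (smooth on $\mathbb R\times(0,\infty)^2$) and $\tilde R(t,\theta,a,\ell)=R(\theta+at,a,\ell)$. $\langle x\rangle=(2+|x|^2)^{1/2}$. $A\lesssim B$ means $A\le CB$ with $C$ independent of $t,\theta,a,\ell$. *)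

theory Defs
  imports "HOL-Analysis.Analysis"
begin

definition kappa :: "real \<Rightarrow> real \<Rightarrow> real \<Rightarrow> real" where
  "kappa m a l = 1 / sqrt (1 + 4 * a\<^sup>2 * l / m\<^sup>2)"

definition pfun :: "real \<Rightarrow> real \<Rightarrow> real \<Rightarrow> real" where
  "pfun m a l = m / (2 * a\<^sup>2 * kappa m a l)"

definition Gk :: "real \<Rightarrow> real \<Rightarrow> real" where
  "Gk k x = sqrt (x\<^sup>2 - 1) - k * ln (x + sqrt (x\<^sup>2 - 1))"

definition Hk :: "real \<Rightarrow> real \<Rightarrow> real" where
  "Hk k y = (THE x. 1 \<le> x \<and> Gk k x = y)"

definition Rfun :: "real \<Rightarrow> real \<Rightarrow> real \<Rightarrow> real \<Rightarrow> real" where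
  "Rfun m \<theta> a l = pfun m a l * Hk (kappa m a l) (\<bar>\<theta>\<bar> / pfun m a l) - pfun m a l * kappa m a l"

definition Rtil :: "real \<Rightarrow> real \<Rightarrow> real \<Rightarrow> real \<Rightarrow> real \<Rightarrow> real" where
  "Rtil m t \<theta> a l = Rfun m (\<theta> + a * t) a l"

definition japan :: "real \<Rightarrow> real" where
  "japan x = sqrt (2 + x\<^sup>2)"

end

theory Submission
  imports Defs
begin

text \<open>
  Substituting \<open>x = cosh u\<close> gives \<open>G\<^sub>\<kappa> (cosh u) = sinh u - \<kappa> u\<close>, so
  \<open>R(\<theta> + a t) = p (cosh u - \<kappa>)\<close> where the hyperbolic angle \<open>u \<ge> 0\<close> solves
  \<open>sinh u - \<kappa> u = (\<theta> + a t) / p\<close>. Implicit differentiation of this equation in \<open>\<theta>\<close> and in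
  \<open>a\<close> (on which \<open>\<kappa>\<close> and \<open>p\<close> depend through \<open>a \<partial>\<^sub>a \<kappa> = -\<kappa> (1 - \<kappa>\<^sup>2)\<close> and
  \<open>a \<partial>\<^sub>a p = -p (1 + \<kappa>\<^sup>2)\<close>) writes every derivative of \<open>R\<close> as an explicit expression in
  \<open>u\<close>, \<open>\<kappa>\<close> and \<open>T = a t / p\<close>. For \<open>|\<theta>| \<le> a t / 2\<close> the right-hand side
  \<open>sinh u - \<kappa> u\<close> lies between \<open>T / 2\<close> and \<open>3 T / 2\<close>, and elementary inequalities for
  \<open>sinh\<close> and \<open>cosh\<close> (treating \<open>u \<le> 1\<close> and \<open>u \<ge> 1\<close> separately) bound each
  expression by powers of \<open>cosh u - \<kappa>\<close>. In the \<open>a\<close>-derivatives a factor \<open>1 + u\<close> remains;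
  since \<open>e\<^sup>u \<lesssim> 1 + T\<close>, one gets \<open>(p / a) (1 + u) \<lesssim> \<langle>p / a\<rangle> ln \<langle>t\<rangle>\<close>.
\<close>

section \<open>Elementary inequalities for sinh and cosh\<close>

lemma sinh_ge_self: "0 \<le> x \<Longrightarrow> x \<le> sinh (x::real)"
  using real_le_x_sinh[of x] by (simp add: sinh_field_def exp_minus field_simps)

lemma sinh_le_mult_cosh:
  assumes "0 \<le> x" shows "sinh x \<le> x * cosh (x::real)"
proof -
  have "(\<lambda>x. x * cosh x - sinh x) 0 \<le> (\<lambda>x. x * cosh x - sinh x) x"
  proof (rule DERIV_nonneg_imp_nondecreasing[OF assms])
    fix y :: real assume "0 \<le> y"
    then show "\<exists>d. ((\<lambda>x. x * cosh x - sinh x) has_real_derivative d) (at y) \<and> 0 \<le> d"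
      by (intro exI[of _ "y * sinh y"] conjI derivative_eq_intros refl) auto
  qed
  then show ?thesis by simp
qed

lemma cosh_ge_1_plus_half_sq: "1 + x\<^sup>2 / 2 \<le> cosh (x::real)"
proof -
  have "(\<lambda>x. cosh x - x\<^sup>2 / 2) 0 \<le> (\<lambda>x. cosh x - x\<^sup>2 / 2) \<bar>x\<bar>"
  proof (rule DERIV_nonneg_imp_nondecreasing[of 0])
    fix y :: real assume "0 \<le> y"
    then show "\<exists>d. ((\<lambda>x. cosh x - x\<^sup>2 / 2) has_real_derivative d) (at y) \<and> 0 \<le> d"
      using sinh_ge_self by (intro exI[of _ "sinh y - y"] conjI derivative_eq_intros refl) auto
  qed simp
  then show ?thesis by simp
qed

lemma cosh_le_2: "\<bar>x\<bar> \<le> 1 \<Longrightarrow> cosh (x::real) \<le> 2"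
proof -
  assume x: "\<bar>x\<bar> \<le> 1"
  have "exp \<bar>x\<bar> + exp (- \<bar>x\<bar>) \<le> exp 1 + 1"
    using x by (intro add_mono) auto
  also have "\<dots> \<le> 4" using exp_le by simp
  finally have "cosh \<bar>x\<bar> \<le> 2" by (simp add: cosh_field_def)
  then show ?thesis by simp
qed

lemma sinh_le_2x: "0 \<le> x \<Longrightarrow> x \<le> 1 \<Longrightarrow> sinh x \<le> 2 * (x::real)"
  using sinh_le_mult_cosh[of x] mult_left_mono[OF cosh_le_2[of x], of x] by simp

lemma exp_le_4_sinh_minus_self:
  assumes "7 \<le> x" shows "exp x / 4 \<le> sinh x - (x::real)"
proof -
  have "7 * x \<le> x * x" using assms by (intro mult_right_mono) auto
  then have "4 * x + 2 \<le> 1 + x + x\<^sup>2 / 2" using assms unfolding power2_eq_square by linarith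
  also have "\<dots> \<le> exp x" using exp_lower_Taylor_quadratic[of x] assms by simp
  finally have "4 * x + 2 \<le> exp x" .
  moreover have "exp (-x) \<le> 1" using assms by simp
  ultimately have "0 \<le> (exp x - 4 * x - 2) / 4 + (1 - exp (-x)) / 2" by simp
  moreover have "sinh x - x - exp x / 4 = (exp x - 4 * x - 2) / 4 + (1 - exp (-x)) / 2"
    by (simp add: sinh_field_def field_simps)
  ultimately show ?thesis by linarith
qed

lemma sinh_diff_ge: "v \<le> w \<Longrightarrow> w - v \<le> sinh w - sinh (v::real)"
proof -
  assume "v \<le> w"
  then have "(\<lambda>x. sinh x - x) v \<le> (\<lambda>x. sinh x - x) w"
  proof (rule DERIV_nonneg_imp_nondecreasing)
    fix y :: real
    show "\<exists>d. ((\<lambda>x. sinh x - x) has_real_derivative d) (at y) \<and> 0 \<le> d"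
      using cosh_real_ge_1[of y] by (intro exI[of _ "cosh y - 1"] conjI derivative_eq_intros refl) auto
  qed
  then show ?thesis by simp
qed

lemma strict_mono_sinh_minus_lin: "k < 1 \<Longrightarrow> strict_mono (\<lambda>x. sinh x - k * (x::real))"
proof (rule strict_monoI)
  fix v w :: real assume "k < 1" "v < w"
  then have "k * (w - v) < w - v" by simp
  also have "\<dots> \<le> sinh w - sinh v" using sinh_diff_ge \<open>v < w\<close> by simp
  finally show "sinh v - k * v < sinh w - k * w" by (simp add: algebra_simps)
qed

section \<open>The inverse of \<open>u \<mapsto> sinh u - k u\<close>\<close>

definition Vk :: "real \<Rightarrow> real \<Rightarrow> real" where
  "Vk k y = (THE u. 0 \<le> u \<and> sinh u - k * u = y)"

lemma sinh_minus_lin_surj: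
  assumes "k < (1::real)" "0 \<le> y" shows "\<exists>u\<ge>0. sinh u - k * u = y"
proof -
  define b where "b = y / (1 - k)"
  have "b - k * b = (1 - k) * b" by (simp add: algebra_simps)
  then have b: "0 \<le> b" "b - k * b = y" using assms by (auto simp: b_def)
  then have "y \<le> sinh b - k * b" using sinh_ge_self[of b] by simp
  moreover have "\<forall>x. 0 \<le> x \<and> x \<le> b \<longrightarrow> isCont (\<lambda>u. sinh u - k * u) x"
    by (auto intro!: continuous_intros)
  ultimately show ?thesis
    using IVT[of "\<lambda>u. sinh u - k * u" 0 y b] b(1) assms(2) by auto
qed

lemma
  assumes "k < (1::real)" "0 \<le> y"
  shows Vk_nonneg: "0 \<le> Vk k y" and sinh_minus_lin_Vk: "sinh (Vk k y) - k * Vk k y = y"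
proof -
  obtain u where u: "0 \<le> u" "sinh u - k * u = y" using sinh_minus_lin_surj[OF assms] by blast
  have "Vk k y = u" unfolding Vk_def
    using u strict_mono_eq[OF strict_mono_sinh_minus_lin[OF assms(1)]] by (intro the_equality) auto
  with u show "0 \<le> Vk k y" "sinh (Vk k y) - k * Vk k y = y" by auto
qed

lemma Vk_pos: "k < (1::real) \<Longrightarrow> 0 < y \<Longrightarrow> 0 < Vk k y"
  using sinh_minus_lin_Vk[of k y] Vk_nonneg[of k y] by (cases "Vk k y = 0") auto

lemma Gk_cosh: "0 \<le> x \<Longrightarrow> Gk k (cosh x) = sinh x - k * x"
  by (simp add: Gk_def cosh_square_eq cosh_plus_sinh)

lemma Hk_eq_cosh_Vk:
  assumes "k < (1::real)" "0 \<le> y" shows "Hk k y = cosh (Vk k y)"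
  unfolding Hk_def
proof (rule the_equality)
  show "1 \<le> cosh (Vk k y) \<and> Gk k (cosh (Vk k y)) = y"
    using Vk_nonneg[OF assms] sinh_minus_lin_Vk[OF assms] Gk_cosh cosh_real_ge_1 by auto
next
  fix x assume x: "1 \<le> x \<and> Gk k x = y"
  then have "0 \<le> arcosh x" "cosh (arcosh x) = x" by auto
  with x have "sinh (arcosh x) - k * arcosh x = sinh (Vk k y) - k * Vk k y"
    using Gk_cosh[of "arcosh x" k] sinh_minus_lin_Vk[OF assms] by simp
  then have "arcosh x = Vk k y" using strict_mono_eq[OF strict_mono_sinh_minus_lin[OF assms(1)]] by blast
  with \<open>cosh (arcosh x) = x\<close> show "x = cosh (Vk k y)" by simp
qed

section \<open>The functions \<open>\<kappa>\<close> and \<open>p\<close>\<close>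

lemma kappa_pos: "0 \<le> l \<Longrightarrow> 0 < kappa m a l"
  unfolding kappa_def by (simp add: add_pos_nonneg)

lemma kappa_less_1: "m \<noteq> 0 \<Longrightarrow> 0 < l \<Longrightarrow> a \<noteq> 0 \<Longrightarrow> kappa m a l < 1"
proof -
  assume "m \<noteq> 0" "0 < l" "a \<noteq> 0"
  then have "1 < sqrt (1 + 4 * a\<^sup>2 * l / m\<^sup>2)" by simp
  then show ?thesis unfolding kappa_def by simp
qed

lemma pfun_pos: "0 < m \<Longrightarrow> 0 \<le> l \<Longrightarrow> a \<noteq> 0 \<Longrightarrow> 0 < pfun m a l"
  unfolding pfun_def using kappa_pos[of l m a] by simp

lemma has_real_derivative_kappa:
  assumes "m \<noteq> 0" "0 \<le> l" "a \<noteq> 0"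
  shows "((\<lambda>a. kappa m a l) has_real_derivative - kappa m a l / a * (1 - (kappa m a l)\<^sup>2)) (at a)"
proof -
  define q where "q a = 1 + 4 * a\<^sup>2 * l / m\<^sup>2" for a
  have q: "0 < q a" using assms by (auto simp: q_def add_pos_nonneg)
  have "(q has_real_derivative 8 * a * l / m\<^sup>2) (at a)"
    unfolding q_def using assms by (auto intro!: derivative_eq_intros simp: field_simps)
  from DERIV_inverse_fun[OF DERIV_chain2[OF DERIV_real_sqrt[OF q] this]]
  have "((\<lambda>a. inverse (sqrt (q a))) has_real_derivative
      - (inverse (sqrt (q a)) / 2 * (8 * a * l / m\<^sup>2) * inverse ((sqrt (q a))\<^sup>2))) (at a)"
    using q by simp
  moreover have "- (inverse s / 2 * (8 * a * l / m\<^sup>2) * inverse (s\<^sup>2))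
      = - inverse s / a * (1 - (inverse s)\<^sup>2)" if "s\<^sup>2 = q a" "0 < s" for s
  proof -
    have "(s\<^sup>2 - 1) / a = 4 * a * l / m\<^sup>2" using that assms by (simp add: q_def power2_eq_square)
    moreover have "- inverse s / a * (1 - (inverse s)\<^sup>2) = - inverse s * inverse (s\<^sup>2) * ((s\<^sup>2 - 1) / a)"
      using that q by (simp add: field_simps power2_eq_square)
    ultimately show ?thesis by simp
  qed
  moreover have "kappa m x l = inverse (sqrt (q x))" for x
    by (simp add: kappa_def q_def divide_inverse)
  ultimately show ?thesis using q by simp
qed

lemma has_real_derivative_pfun:
  assumes "m \<noteq> 0" "0 \<le> l" "a \<noteq> 0"
  shows "((\<lambda>a. pfun m a l) has_real_derivative - pfun m a l / a * (1 + (kappa m a l)\<^sup>2)) (at a)"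
  unfolding pfun_def using has_real_derivative_kappa[OF assms] assms kappa_pos[of l m a]
  by (auto intro!: derivative_eq_intros simp: field_simps power2_eq_square)

section \<open>Implicit differentiation\<close>

lemma isCont_implicit_sinh:
  fixes g B c :: "real \<Rightarrow> real"
  assumes S: "open S" "x \<in> S"
    and eq: "\<And>z. z \<in> S \<Longrightarrow> sinh (g z) - B z * g z = c z"
    and B_less_1: "\<And>z. z \<in> S \<Longrightarrow> B z < 1"
    and "isCont B x" "isCont c x"
  shows "isCont g x"
  unfolding isCont_def tendsto_iff
proof (intro allI impI)
  fix e :: real assume "0 < e"
  define F where "F z v = sinh v - B z * v - c z" for z v
  have mono: "F z v < F z w \<longleftrightarrow> v < w" if "z \<in> S" for z v w
    using strict_mono_less[OF strict_mono_sinh_minus_lin[OF B_less_1[OF that]]] by (simp add: F_def)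
  have F_g: "F z (g z) = 0" if "z \<in> S" for z using eq[OF that] by (simp add: F_def)
  have "isCont (\<lambda>z. F z (g x + e)) x" "isCont (\<lambda>z. F z (g x - e)) x"
    unfolding F_def using assms(5,6) by (auto intro!: continuous_intros)
  moreover have "0 < F x (g x + e)" "F x (g x - e) < 0"
    using mono[OF S(2), of "g x" "g x + e"] mono[OF S(2), of "g x - e" "g x"] F_g[OF S(2)] \<open>0 < e\<close>
    by simp_all
  ultimately have "eventually (\<lambda>z. 0 < F z (g x + e)) (at x)" "eventually (\<lambda>z. F z (g x - e) < 0) (at x)"
    unfolding isCont_def by (auto dest: order_tendstoD)
  then show "eventually (\<lambda>z. dist (g z) (g x) < e) (at x)"
    using eventually_at_in_open'[OF S]
  proof eventually_elim
    case (elim z)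
    then have "g z < g x + e" "g x - e < g z"
      using mono[of z "g z" "g x + e"] mono[of z "g x - e" "g z"] F_g[of z] by simp_all
    then show ?case by (simp add: dist_real_def abs_less_iff)
  qed
qed

lemma has_real_derivative_implicit_sinh:
  fixes g B c :: "real \<Rightarrow> real"
  assumes S: "open S" "x \<in> S"
    and eq: "\<And>z. z \<in> S \<Longrightarrow> sinh (g z) - B z * g z = c z"
    and B_less_1: "\<And>z. z \<in> S \<Longrightarrow> B z < 1"
    and B: "(B has_real_derivative B') (at x)" and c: "(c has_real_derivative c') (at x)"
  shows "(g has_real_derivative (g x * B' + c') / (cosh (g x) - B x)) (at x)"
proof -
  have "isCont g x"
    using eq B_less_1 DERIV_isCont[OF B] DERIV_isCont[OF c] by (rule isCont_implicit_sinh[OF S])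
  txt \<open>With the slope \<open>\<sigma>\<close> of \<open>sinh\<close> at \<open>g x\<close>, the equation becomes
    \<open>(g y - g x) (\<sigma> (g y) - B y) = g x (B y - B x) + (c y - c x)\<close>.\<close>
  obtain \<sigma> where \<sigma>: "\<And>w. sinh w - sinh (g x) = \<sigma> w * (w - g x)" "isCont \<sigma> (g x)" "\<sigma> (g x) = cosh (g x)"
    using CARAT_DERIV[THEN iffD1, OF has_field_derivative_sinh[OF DERIV_ident]] by auto
  have denom: "cosh (g x) - B x \<noteq> 0" using B_less_1[OF S(2)] cosh_real_ge_1[of "g x"] by simp
  have \<sigma>_g: "((\<lambda>y. \<sigma> (g y)) \<longlongrightarrow> cosh (g x)) (at x)"
    using isCont_tendsto_compose[OF \<sigma>(2) \<open>isCont g x\<close>[unfolded isCont_def]] \<sigma>(3) by simp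
  have B_tendsto: "(B \<longlongrightarrow> B x) (at x)" using DERIV_isCont[OF B] by (simp add: isCont_def)
  have lim: "((\<lambda>y. (g x * ((B y - B x) / (y - x)) + (c y - c x) / (y - x)) / (\<sigma> (g y) - B y))
      \<longlongrightarrow> (g x * B' + c') / (cosh (g x) - B x)) (at x)"
    using B c denom unfolding has_field_derivative_iff by (intro tendsto_intros \<sigma>_g B_tendsto) auto
  have "eventually (\<lambda>y. \<sigma> (g y) - B y \<noteq> 0) (at x)"
    using tendsto_imp_eventually_ne[OF tendsto_diff[OF \<sigma>_g B_tendsto] denom] .
  then have "eventually (\<lambda>y. (g x * ((B y - B x) / (y - x)) + (c y - c x) / (y - x)) / (\<sigma> (g y) - B y)
      = (g y - g x) / (y - x)) (at x)"
    using eventually_at_in_open[OF S]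
  proof eventually_elim
    case (elim y)
    have "g x * (B y - B x) + (c y - c x) = (g y - g x) * (\<sigma> (g y) - B y)"
      using \<sigma>(1)[of "g y"] eq[of y] eq[OF S(2)] elim(2) by (simp add: algebra_simps)
    then have "g x * ((B y - B x) / (y - x)) + (c y - c x) / (y - x)
        = (g y - g x) * (\<sigma> (g y) - B y) / (y - x)"
      by (simp add: add_divide_distrib[symmetric])
    then show ?case using elim(1) by simp
  qed
  from Lim_transform_eventually[OF lim this] show ?thesis unfolding has_field_derivative_iff .
qed

section \<open>Estimates in terms of the hyperbolic angle\<close>

text \<open>With \<open>u\<close> the hyperbolic angle and \<open>T = a t / p\<close>, the \<open>a\<close>-derivative of \<open>Rtil\<close> is
  \<open>t + p / a * (T (\<kappa> - e\<^sup>-\<^sup>u) + Nk \<kappa> u) / (cosh u - \<kappa>)\<close>.\<close>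

definition Nk :: "real \<Rightarrow> real \<Rightarrow> real" where
  "Nk k u = k * (3 + k\<^sup>2) * cosh u - (1 + 3 * k\<^sup>2) - 2 * k * u * sinh u"

lemma Nk_eq:
  "Nk K u = sinh u * ((1 + K\<^sup>2) * sinh u - 2 * K * u) + K * (1 - K\<^sup>2) * (cosh u - K)
    - (1 + K\<^sup>2) * (cosh u - K)\<^sup>2"
proof -
  have "cosh u * cosh u = sinh u * sinh u + 1" using cosh_square_eq[of u] by (simp add: power2_eq_square)
  then show ?thesis by (simp add: Nk_def algebra_simps power2_eq_square)
qed

lemma has_real_derivative_Nk:
  assumes "(k has_real_derivative k') (at x)" "(v has_real_derivative v') (at x)"
  shows "((\<lambda>x. Nk (k x) (v x)) has_real_derivative
      (3 * (1 + (k x)\<^sup>2) * cosh (v x) - 6 * k x - 2 * v x * sinh (v x)) * k'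
      + (k x * (1 + (k x)\<^sup>2) * sinh (v x) - 2 * k x * v x * cosh (v x)) * v') (at x)"
  unfolding Nk_def using assms
  by (auto intro!: derivative_eq_intros simp: algebra_simps power2_eq_square)

context
  fixes u K :: real
  assumes u_pos: "0 < u" and K_pos: "0 < K" and K_less_1: "K < 1"
begin

text \<open>Here \<open>K\<close> plays the role of \<open>\<kappa>\<close>, so that \<open>Rtil = p * E\<close> and \<open>\<theta> + a t = p * Y\<close>.\<close>

abbreviation "E \<equiv> cosh u - K"
abbreviation "Y \<equiv> sinh u - K * u"
abbreviation "W \<equiv> (1 + K\<^sup>2) * sinh u - 2 * K * u"

lemma E_lower_bounds:
  shows "1 - K \<le> E" and "cosh u - 1 \<le> E" and "(1 - K) * cosh u \<le> E" and "(1 - K) * sinh u \<le> E"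
proof -
  show "1 - K \<le> E" "cosh u - 1 \<le> E" using cosh_real_ge_1[of u] K_less_1 by auto
  show *: "(1 - K) * cosh u \<le> E"
    using mult_left_mono[OF cosh_real_ge_1[of u], of K] K_pos by (simp add: algebra_simps)
  have "(1 - K) * sinh u \<le> (1 - K) * cosh u"
    using K_less_1 by (intro mult_left_mono sinh_le_cosh_real) auto
  with * show "(1 - K) * sinh u \<le> E" by linarith
qed

lemma E_pos: "0 < E"
  using E_lower_bounds(1) K_less_1 by simp

lemma Y_pos: "0 < Y"
  using sinh_ge_self[of u] mult_strict_right_mono[OF K_less_1 u_pos] u_pos by linarith

lemma Y_le_E: "Y \<le> E"
proof -
  have "K * (1 - u) \<le> exp (-u)"
  proof (cases "u \<le> 1")
    case True
    then have "K * (1 - u) \<le> 1 - u" using K_pos K_less_1 by (intro mult_left_le_one_le) auto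
    then show ?thesis using exp_ge_add_one_self[of "-u"] by simp
  next
    case False
    then show ?thesis using K_pos by (simp add: mult_nonneg_nonpos order.trans[OF _ less_imp_le[OF exp_gt_zero]])
  qed
  then show ?thesis by (simp add: cosh_minus_sinh[symmetric] algebra_simps)
qed

lemma Y_le_u_E: "Y \<le> u * E"
  using sinh_le_mult_cosh[of u] u_pos by (simp add: algebra_simps)

lemma sinh_minus_self_le_Y: "sinh u - u \<le> Y"
  using mult_right_mono[OF less_imp_le[OF K_less_1], of u] u_pos by simp

lemma W_nonneg: "0 \<le> W"
proof -
  have "2 * K \<le> 1 + K\<^sup>2" using sum_power2_ge_zero[of "1 - K" 0] by (simp add: power2_eq_square algebra_simps)
  moreover have "2 * K * u \<le> 2 * K * sinh u"
    using sinh_ge_self[of u] u_pos K_pos by (intro mult_left_mono) auto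
  moreover have "2 * K * sinh u \<le> (1 + K\<^sup>2) * sinh u"
    using calculation(1) u_pos by (intro mult_right_mono) auto
  ultimately show ?thesis by linarith
qed

lemma W_le_2Y: "W \<le> 2 * Y"
proof -
  have "K\<^sup>2 \<le> 1" using K_pos K_less_1 by (simp add: abs_square_le_1)
  then have "0 \<le> (1 - K\<^sup>2) * sinh u" using u_pos by simp
  then show ?thesis by (simp add: algebra_simps)
qed

lemma abs_1_minus_K_cosh_le: "\<bar>1 - K * cosh u\<bar> \<le> E"
proof -
  have "K \<le> K * cosh u" "K * cosh u \<le> cosh u"
    using cosh_real_ge_1[of u] K_pos K_less_1 by (auto intro: mult_left_le_one_le)
  then show ?thesis using cosh_real_ge_1[of u] K_less_1 unfolding abs_le_iff by (intro conjI) linarith+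
qed

lemma abs_K_minus_exp_le_1: "\<bar>K - exp (-u)\<bar> \<le> 1"
proof -
  have "0 < exp (-u)" "exp (-u) < 1" using u_pos by auto
  then show ?thesis using K_pos K_less_1 unfolding abs_le_iff by (intro conjI) linarith+
qed

lemma sq_le_2E: "u\<^sup>2 \<le> 2 * E"
  using cosh_ge_1_plus_half_sq[of u] E_lower_bounds(2) by simp

lemma cosh_le_3E: "1 \<le> u \<Longrightarrow> cosh u \<le> 3 * E"
proof -
  assume "1 \<le> u"
  then have "1 \<le> u\<^sup>2" by (simp add: one_le_power)
  then show ?thesis using cosh_ge_1_plus_half_sq[of u] E_lower_bounds(2) by (simp add: algebra_simps)
qed

lemma sinh_Y_le: "sinh u * Y \<le> 4 * E\<^sup>2"
proof (cases "1 \<le> u")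
  case True
  have "sinh u * Y \<le> (3 * E) * E"
    using cosh_le_3E[OF True] sinh_le_cosh_real[of u] Y_le_E Y_pos u_pos by (intro mult_mono) auto
  also have "\<dots> \<le> (4 * E) * E" using E_pos by (intro mult_right_mono) auto
  finally show ?thesis by (simp only: power2_eq_square mult_ac)
next
  case False
  have "sinh u * Y \<le> (2 * u) * (u * E)"
    using sinh_le_2x[of u] False u_pos Y_le_u_E Y_pos by (intro mult_mono) auto
  also have "\<dots> = (2 * u\<^sup>2) * E" by (simp add: power2_eq_square)
  also have "\<dots> \<le> (4 * E) * E" using sq_le_2E E_pos by (intro mult_right_mono) auto
  finally show ?thesis by (simp only: power2_eq_square mult_ac)
qed

lemma sinh_mult_self_le: "sinh u * u \<le> 4 * (1 + u) * E"
proof (cases "1 \<le> u")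
  case True
  have "sinh u * u \<le> (3 * E) * u"
    using cosh_le_3E[OF True] sinh_le_cosh_real[of u] u_pos by (intro mult_right_mono) auto
  also have "\<dots> \<le> (4 * E) * (1 + u)" using E_pos u_pos by (intro mult_mono) auto
  finally show ?thesis by (simp only: mult_ac)
next
  case False
  have "sinh u * u \<le> (2 * u) * u"
    using sinh_le_2x[of u] False u_pos by (intro mult_right_mono) auto
  also have "\<dots> = 2 * u\<^sup>2" by (simp add: power2_eq_square)
  also have "\<dots> \<le> (4 * E) * 1" using sq_le_2E by simp
  also have "\<dots> \<le> (4 * E) * (1 + u)" using E_pos u_pos by (intro mult_left_mono) auto
  finally show ?thesis by (simp only: mult_ac)
qed

lemma cosh_u_Y_le: "cosh u * u * Y \<le> 8 * (1 + u) * E\<^sup>2"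
proof (cases "1 \<le> u")
  case True
  have "cosh u * Y \<le> (3 * E) * E" using cosh_le_3E[OF True] Y_le_E Y_pos by (intro mult_mono) auto
  then have "cosh u * Y * u \<le> (3 * E * E) * u" using u_pos by (intro mult_right_mono) auto
  also have "\<dots> \<le> (8 * E * E) * (1 + u)" using E_pos u_pos by (intro mult_mono) auto
  finally show ?thesis by (simp only: power2_eq_square mult_ac)
next
  case False
  have "cosh u * (u * Y) \<le> 2 * (sinh u * Y)"
    using cosh_le_2[of u] sinh_ge_self[of u] False u_pos Y_pos by (intro mult_mono) auto
  also have "\<dots> \<le> (8 * E\<^sup>2) * 1" using sinh_Y_le by simp
  also have "\<dots> \<le> (8 * E\<^sup>2) * (1 + u)" using u_pos by (intro mult_left_mono) auto
  finally show ?thesis by (simp only: mult_ac)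
qed

lemma abs_Nk_le: "\<bar>Nk K u\<bar> \<le> 13 * (1 + u) * E"
proof -
  define A where "A = K * (3 + K\<^sup>2) * (cosh u - 1)"
  define B where "B = 2 * K * (sinh u * u)"
  define C where "C = (1 - K) ^ 3"
  have "Nk K u = A - B - C"
    by (simp add: Nk_def A_def B_def C_def algebra_simps power2_eq_square power3_eq_cube)
  moreover have "0 \<le> A" "0 \<le> B" "0 \<le> C"
    using K_pos K_less_1 u_pos cosh_real_ge_1[of u] by (auto simp: A_def B_def C_def)
  ultimately have "\<bar>Nk K u\<bar> \<le> A + B + C" by simp
  also have "A \<le> (1 * 4) * E"
    unfolding A_def using K_pos K_less_1 E_lower_bounds(2) cosh_real_ge_1[of u]
    by (intro mult_mono) (auto simp: abs_square_le_1)
  also have "B \<le> (2 * 1) * (4 * (1 + u) * E)"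
    unfolding B_def using sinh_mult_self_le K_less_1 K_pos u_pos by (rule_tac mult_mono) auto
  also have "C \<le> 1 - K"
    unfolding C_def using K_pos K_less_1 by (simp add: power3_eq_cube mult_le_one)
  also have "1 - K \<le> E" by (rule E_lower_bounds(1))
  also have "(1 * 4) * E + (2 * 1) * (4 * (1 + u) * E) + E \<le> 13 * (1 + u) * E"
    using mult_right_mono[of "13 + 8 * u" "13 + 13 * u" E] E_pos u_pos by (simp add: algebra_simps)
  finally show ?thesis by simp
qed

lemma u_le_7_plus_ln: "u \<le> 7 + ln (1 + Y)"
proof (cases "u \<le> 7")
  case True
  have "0 \<le> ln (1 + Y)" using Y_pos by (intro ln_ge_zero) linarith
  with True show ?thesis by linarith
next
  case False
  then have "exp u / 4 \<le> sinh u - u" by (intro exp_le_4_sinh_minus_self) simp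
  then have "exp u \<le> 4 * (1 + Y)" using sinh_minus_self_le_Y by (simp add: algebra_simps)
  then have "ln (exp u) \<le> ln (4 * (1 + Y))" using Y_pos by (subst ln_le_cancel_iff) auto
  moreover have "ln (4 * (1 + Y)) = ln 4 + ln (1 + Y)" using Y_pos by (intro ln_mult_pos) auto
  ultimately have "u \<le> ln 4 + ln (1 + Y)" by simp
  moreover have "ln (4::real) \<le> 3" using ln_le_minus_one[of 4] by simp
  ultimately show ?thesis by simp
qed

lemma cosh_le_exp_7_plus_Y: "cosh u \<le> exp 7 + 4 * Y"
proof -
  have "cosh u \<le> exp u" using u_pos by (simp add: cosh_field_def)
  moreover have "exp u \<le> exp 7 + 4 * Y"
  proof (cases "u \<le> 7")
    case True
    then have "exp u \<le> exp 7" by simp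
    then show ?thesis using Y_pos by argo
  next
    case False
    then have "exp u / 4 \<le> sinh u - u" by (intro exp_le_4_sinh_minus_self) simp
    then have "exp u \<le> 4 * Y" using sinh_minus_self_le_Y by (simp add: algebra_simps)
    then show ?thesis using exp_gt_zero[of 7] by linarith
  qed
  ultimately show ?thesis by simp
qed

lemma K_one_minus_K_sq_bounds:
  shows "0 \<le> K * (1 - K\<^sup>2)" and "K * (1 - K\<^sup>2) \<le> 1"
    and "K * (1 - K\<^sup>2) \<le> 2 * (1 - K)" and "K * (1 - K\<^sup>2) \<le> 2 * E"
proof -
  have "K\<^sup>2 \<le> 1" using K_pos K_less_1 by (simp add: abs_square_le_1)
  then show "0 \<le> K * (1 - K\<^sup>2)" "K * (1 - K\<^sup>2) \<le> 1"
    using K_pos K_less_1 by (auto simp: mult_le_one)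
  have "K * (1 - K\<^sup>2) = (1 - K) * (K * (1 + K))" by (simp add: algebra_simps power2_eq_square)
  also have "\<dots> \<le> (1 - K) * 2"
    using K_pos K_less_1 by (intro mult_left_mono) (auto intro: order.trans[of _ "1 + K"] mult_left_le_one_le)
  finally show "K * (1 - K\<^sup>2) \<le> 2 * (1 - K)" by simp
  then show "K * (1 - K\<^sup>2) \<le> 2 * E" using E_lower_bounds(1) by argo
qed

context
  fixes T :: real
  assumes T_nonneg: "0 \<le> T" and T_le_2Y: "T \<le> 2 * Y"
begin

text \<open>\<open>T\<close> plays the role of \<open>a t / p\<close>. Then \<open>\<partial>\<^sub>a Rtil = t + p / a * Ra\<close> and
  \<open>\<partial>\<^sub>a\<^sup>2 Rtil = p / a\<^sup>2 * Raa\<close>, where \<open>Da_X\<close> stands for \<open>a \<partial>\<^sub>a X\<close>.\<close>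

abbreviation "Ra \<equiv> (T * (K - exp (-u)) + Nk K u) / E"
abbreviation "Da_u \<equiv> (T + W) / E"
abbreviation "Da_E \<equiv> sinh u * Da_u + K * (1 - K\<^sup>2)"
abbreviation "Da_Ra_num \<equiv> (T * exp (-u) + (K * (1 + K\<^sup>2) * sinh u - 2 * K * u * cosh u)) * Da_u
    - (T + (3 * (1 + K\<^sup>2) * cosh u - 6 * K - 2 * u * sinh u)) * (K * (1 - K\<^sup>2))
    + (2 + K\<^sup>2) * T * (K - exp (-u))"
abbreviation "Raa \<equiv> Da_Ra_num / E - (2 + K\<^sup>2 + Da_E / E) * Ra"

lemma T_le_2E: "T \<le> 2 * E"
  using T_le_2Y Y_le_E by simp

lemma Da_u_nonneg: "0 \<le> Da_u"
  using T_nonneg W_nonneg E_pos by simp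

lemma T_plus_W_le_4Y: "T + W \<le> 4 * Y"
  using T_le_2Y W_le_2Y by argo

lemma Da_u_le_4: "Da_u \<le> 4"
  using T_plus_W_le_4Y Y_le_E E_pos by (simp add: divide_le_eq)

lemma sinh_Da_u_le: "sinh u * Da_u \<le> 16 * E"
proof -
  have "sinh u * (T + W) \<le> sinh u * (4 * Y)"
    using T_plus_W_le_4Y u_pos by (intro mult_left_mono) auto
  also have "\<dots> = 4 * (sinh u * Y)" by (simp only: mult_ac)
  also have "\<dots> \<le> 4 * (4 * E\<^sup>2)" using sinh_Y_le by simp
  also have "\<dots> = (16 * E) * E" by (simp add: power2_eq_square algebra_simps)
  finally show ?thesis using E_pos by (simp add: pos_divide_le_eq)
qed

lemma u_cosh_Da_u_le: "u * cosh u * Da_u \<le> 32 * (1 + u) * E"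
proof -
  have "u * cosh u * (T + W) \<le> u * cosh u * (4 * Y)"
    using T_plus_W_le_4Y u_pos by (intro mult_left_mono) auto
  also have "\<dots> = 4 * (cosh u * u * Y)" by (simp only: mult_ac)
  also have "\<dots> \<le> 4 * (8 * (1 + u) * E\<^sup>2)" using cosh_u_Y_le by simp
  also have "\<dots> = (32 * (1 + u) * E) * E" by (simp add: power2_eq_square algebra_simps)
  finally show ?thesis using E_pos by (simp add: pos_divide_le_eq)
qed

lemma abs_K_minus_exp_T_le: "\<bar>K - exp (-u)\<bar> * T \<le> 2 * E"
  using mult_mono[OF abs_K_minus_exp_le_1 T_le_2E] T_nonneg by simp

lemma abs_Ra_numerator_le: "\<bar>T * (K - exp (-u)) + Nk K u\<bar> \<le> 15 * (1 + u) * E"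
proof -
  have "\<bar>T * (K - exp (-u)) + Nk K u\<bar> \<le> \<bar>K - exp (-u)\<bar> * T + \<bar>Nk K u\<bar>"
    using abs_triangle_ineq[of "T * (K - exp (-u))" "Nk K u"] T_nonneg by (simp add: abs_mult mult.commute)
  also have "\<dots> \<le> 2 * E + 13 * (1 + u) * E" using abs_K_minus_exp_T_le abs_Nk_le by simp
  also have "\<dots> \<le> 15 * (1 + u) * E"
    using mult_right_mono[of "15 + 13 * u" "15 + 15 * u" E] E_pos u_pos by (simp add: algebra_simps)
  finally show ?thesis .
qed

lemma abs_Ra_le: "\<bar>Ra\<bar> \<le> 15 * (1 + u)"
  using abs_Ra_numerator_le E_pos by (simp add: pos_divide_le_eq)

lemma T_sq_abs_1_minus_K_cosh_le: "T\<^sup>2 * \<bar>1 - K * cosh u\<bar> \<le> 4 * E ^ 3"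
proof -
  have "T\<^sup>2 * \<bar>1 - K * cosh u\<bar> \<le> (2 * E)\<^sup>2 * E"
    using power_mono[OF T_le_2E T_nonneg, of 2] abs_1_minus_K_cosh_le by (intro mult_mono) auto
  then show ?thesis by (simp add: power2_eq_square power3_eq_cube algebra_simps)
qed

lemma T_abs_mixed_le:
  "T * \<bar>(1 - K * cosh u) * (T + W) - K * (1 - K\<^sup>2) * sinh u * E\<bar> \<le> 12 * E ^ 3"
proof -
  have first: "\<bar>(1 - K * cosh u) * (T + W)\<bar> \<le> E * (4 * E)"
    unfolding abs_mult using abs_1_minus_K_cosh_le T_plus_W_le_4Y Y_le_E T_nonneg W_nonneg
    by (intro mult_mono) auto
  have "K * (1 - K\<^sup>2) * sinh u \<le> 2 * (1 - K) * sinh u"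
    using K_one_minus_K_sq_bounds(3) u_pos by (intro mult_right_mono) auto
  also have "\<dots> = 2 * ((1 - K) * sinh u)" by simp
  also have "\<dots> \<le> 2 * E" using E_lower_bounds(4) by simp
  finally have second: "K * (1 - K\<^sup>2) * sinh u * E \<le> (2 * E) * E"
    using E_pos by (intro mult_right_mono) auto
  have "0 \<le> K * (1 - K\<^sup>2) * sinh u * E"
    using K_one_minus_K_sq_bounds(1) u_pos E_pos by simp
  with first second
  have "\<bar>(1 - K * cosh u) * (T + W) - K * (1 - K\<^sup>2) * sinh u * E\<bar> \<le> 6 * E\<^sup>2"
    by (simp add: abs_le_iff power2_eq_square algebra_simps)
  then have "T * \<bar>(1 - K * cosh u) * (T + W) - K * (1 - K\<^sup>2) * sinh u * E\<bar> \<le> (2 * E) * (6 * E\<^sup>2)"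
    using T_le_2E T_nonneg by (intro mult_mono) auto
  then show ?thesis by (simp add: power2_eq_square power3_eq_cube algebra_simps)
qed

lemma abs_Da_E_le: "\<bar>Da_E\<bar> \<le> 18 * E"
proof -
  have "0 \<le> sinh u * Da_u" using u_pos Da_u_nonneg by (intro mult_nonneg_nonneg) auto
  then show ?thesis using sinh_Da_u_le K_one_minus_K_sq_bounds(1,4) by argo
qed

lemma abs_Nk_du_Da_u_le: "\<bar>K * (1 + K\<^sup>2) * sinh u - 2 * K * u * cosh u\<bar> * Da_u \<le> (96 + 64 * u) * E"
proof -
  have "K\<^sup>2 \<le> 1" using K_pos K_less_1 by (simp add: abs_square_le_1)
  then have "K * (1 + K\<^sup>2) \<le> 1 * 2" using K_pos K_less_1 by (intro mult_mono) auto
  then have "K * (1 + K\<^sup>2) * sinh u \<le> 2 * sinh u" "0 \<le> K * (1 + K\<^sup>2) * sinh u"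
    using K_pos u_pos by (auto intro: mult_right_mono)
  moreover have "2 * K * u * cosh u \<le> 2 * (u * cosh u)" "0 \<le> 2 * K * u * cosh u"
    using K_pos K_less_1 u_pos mult_left_le_one_le[of "u * cosh u" K] by (auto simp: mult_ac)
  ultimately have "\<bar>K * (1 + K\<^sup>2) * sinh u - 2 * K * u * cosh u\<bar> \<le> 2 * sinh u + 2 * (u * cosh u)"
    by argo
  then have "\<bar>K * (1 + K\<^sup>2) * sinh u - 2 * K * u * cosh u\<bar> * Da_u \<le> (2 * sinh u + 2 * (u * cosh u)) * Da_u"
    using Da_u_nonneg by (rule mult_right_mono)
  also have "\<dots> = 2 * (sinh u * Da_u) + 2 * (u * cosh u * Da_u)" by (simp only: distrib_right mult.assoc)
  also have "\<dots> \<le> 2 * (16 * E) + 2 * (32 * (1 + u) * E)" using sinh_Da_u_le u_cosh_Da_u_le by simp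
  also have "\<dots> = (96 + 64 * u) * E" by (simp add: algebra_simps)
  finally show ?thesis .
qed

lemma abs_Nk_dK_le:
  "\<bar>3 * (1 + K\<^sup>2) * cosh u - 6 * K - 2 * u * sinh u\<bar> * (K * (1 - K\<^sup>2)) \<le> (24 + 4 * u) * E"
proof -
  have "K\<^sup>2 \<le> 1" using K_pos K_less_1 by (simp add: abs_square_le_1)
  then have "3 * (1 + K\<^sup>2) * cosh u \<le> 6 * cosh u" "0 \<le> 3 * (1 + K\<^sup>2) * cosh u"
    "0 \<le> 2 * u * sinh u" using u_pos by auto
  then have "\<bar>3 * (1 + K\<^sup>2) * cosh u - 6 * K - 2 * u * sinh u\<bar> \<le> 6 * cosh u + 6 + 2 * u * sinh u"
    using K_pos K_less_1 by argo
  then have "\<bar>3 * (1 + K\<^sup>2) * cosh u - 6 * K - 2 * u * sinh u\<bar> * (K * (1 - K\<^sup>2))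
      \<le> (6 * cosh u + 6 + 2 * u * sinh u) * (2 * (1 - K))"
    using K_one_minus_K_sq_bounds(1,3) u_pos by (rule_tac mult_mono) auto
  also have "\<dots> = 12 * ((1 - K) * cosh u) + 12 * (1 - K) + 4 * u * ((1 - K) * sinh u)"
    by (simp add: algebra_simps)
  also have "\<dots> \<le> 12 * E + 12 * E + 4 * u * E"
    using E_lower_bounds u_pos by (intro add_mono mult_left_mono) auto
  also have "\<dots> = (24 + 4 * u) * E" by (simp add: algebra_simps)
  finally show ?thesis .
qed

lemma abs_Da_Ra_num_le: "\<bar>Da_Ra_num\<bar> \<le> 140 * (1 + u) * E"
proof -
  define a1 where "a1 = T * exp (-u) * Da_u"
  define a2 where "a2 = (K * (1 + K\<^sup>2) * sinh u - 2 * K * u * cosh u) * Da_u"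
  define a3 where "a3 = T * (K * (1 - K\<^sup>2))"
  define a4 where "a4 = (3 * (1 + K\<^sup>2) * cosh u - 6 * K - 2 * u * sinh u) * (K * (1 - K\<^sup>2))"
  define a5 where "a5 = (2 + K\<^sup>2) * T * (K - exp (-u))"
  have distrib: "(x + y) * d - (z + w) * k + v = x * d + y * d - z * k - w * k + v" for x y z w d k v :: real
    by (simp add: algebra_simps)
  have "Da_Ra_num = a1 + a2 - a3 - a4 + a5"
    unfolding a1_def a2_def a3_def a4_def a5_def by (rule distrib)
  moreover have "\<bar>a1\<bar> \<le> 8 * E"
  proof -
    have "T * exp (-u) * Da_u \<le> (2 * E) * 1 * 4"
      using T_le_2E T_nonneg u_pos Da_u_le_4 Da_u_nonneg by (intro mult_mono) auto
    moreover have "0 \<le> T * exp (-u) * Da_u" using T_nonneg Da_u_nonneg by (simp only: zero_le_mult_iff) simp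
    ultimately show ?thesis by (simp add: a1_def)
  qed
  moreover have "\<bar>a2\<bar> \<le> (96 + 64 * u) * E"
    unfolding a2_def abs_mult abs_of_nonneg[OF Da_u_nonneg] by (rule abs_Nk_du_Da_u_le)
  moreover have "\<bar>a3\<bar> \<le> 2 * E"
  proof -
    have "T * (K * (1 - K\<^sup>2)) \<le> (2 * E) * 1"
      using T_le_2E T_nonneg K_one_minus_K_sq_bounds(1,2) by (intro mult_mono) auto
    moreover have "0 \<le> T * (K * (1 - K\<^sup>2))" using T_nonneg K_one_minus_K_sq_bounds(1) by simp
    ultimately show ?thesis by (simp add: a3_def)
  qed
  moreover have "\<bar>a4\<bar> \<le> (24 + 4 * u) * E"
    using abs_Nk_dK_le unfolding a4_def abs_mult[of _ "K * (1 - K\<^sup>2)"] abs_of_nonneg[OF K_one_minus_K_sq_bounds(1)] .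
  moreover have "\<bar>a5\<bar> \<le> 6 * E"
  proof -
    have "(2 + K\<^sup>2) * (\<bar>K - exp (-u)\<bar> * T) \<le> 3 * (2 * E)"
      using abs_K_minus_exp_T_le K_pos K_less_1 T_nonneg by (rule_tac mult_mono) (auto simp: abs_square_le_1)
    then show ?thesis using T_nonneg by (simp add: a5_def abs_mult mult_ac)
  qed
  ultimately have "\<bar>Da_Ra_num\<bar> \<le> 8 * E + (96 + 64 * u) * E + 2 * E + (24 + 4 * u) * E + 6 * E"
    unfolding abs_le_iff by linarith
  also have "\<dots> \<le> 140 * (1 + u) * E"
    using mult_right_mono[of "136 + 68 * u" "140 * (1 + u)" E] E_pos u_pos by (simp add: algebra_simps)
  finally show ?thesis .
qed

lemma abs_Raa_le: "\<bar>Raa\<bar> \<le> 455 * (1 + u)"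
proof -
  have "\<bar>Da_Ra_num / E\<bar> \<le> 140 * (1 + u)"
    using abs_Da_Ra_num_le E_pos by (simp add: pos_divide_le_eq)
  moreover note abs_Ra_le
  moreover have "\<bar>2 + K\<^sup>2 + Da_E / E\<bar> \<le> 21"
  proof -
    have "\<bar>Da_E / E\<bar> \<le> 18" using abs_Da_E_le E_pos by (simp add: pos_divide_le_eq)
    moreover have "K\<^sup>2 \<le> 1" using K_pos K_less_1 by (simp add: abs_square_le_1)
    moreover have "\<bar>2 + K\<^sup>2 + x\<bar> \<le> 21" if "\<bar>x\<bar> \<le> 18" "K\<^sup>2 \<le> 1" for x
      using that zero_le_power2[of K] unfolding abs_le_iff by (intro conjI) linarith+
    ultimately show ?thesis by blast
  qed
  ultimately have "\<bar>Raa\<bar> \<le> 140 * (1 + u) + 21 * (15 * (1 + u))"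
    using abs_triangle_ineq4[of "Da_Ra_num / E" "(2 + K\<^sup>2 + Da_E / E) * Ra"] u_pos
      mult_mono[of "\<bar>2 + K\<^sup>2 + Da_E / E\<bar>" 21 "\<bar>Ra\<bar>" "15 * (1 + u)"]
    by (simp add: abs_mult)
  then show ?thesis by simp
qed

end

end

lemma ln_japan_ge: "1 / 3 \<le> ln (japan x)"
proof -
  have "ln 2 \<le> ln (2 + x\<^sup>2)" by (simp add: add_pos_nonneg)
  moreover have "ln (japan x) = ln (2 + x\<^sup>2) / 2" by (simp add: japan_def ln_sqrt add_pos_nonneg)
  ultimately show ?thesis using ln2_ge_two_thirds by linarith
qed

lemma japan_ge: "1 \<le> japan x" "x \<le> japan x"
  unfolding japan_def by (auto intro: real_le_rsqrt)

lemma scaled_log_le_japan_ln: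
  assumes r: "0 < r" and t: "0 < t" and y: "0 \<le> y" "y \<le> 2 * (t / r)"
    and u: "u \<le> 7 + ln (1 + y)"
  shows "r * (1 + u) \<le> 29 * (japan r * ln (japan t))"
proof -
  define L where "L = ln (japan t)"
  have L: "1 / 3 \<le> L" unfolding L_def by (rule ln_japan_ge)
  have "(1 + 2 * t) * (1 + 1 / r) = 1 + 2 * (t / r) + (1 / r + 2 * t)"
    using r by (simp add: field_simps)
  then have "1 + y \<le> (1 + 2 * t) * (1 + 1 / r)"
    using y r t by (simp add: add_increasing2)
  then have "ln (1 + y) \<le> ln (1 + 2 * t) + ln (1 + 1 / r)"
    using y r t by (simp add: ln_mult_pos[symmetric] add_pos_pos)
  moreover have "ln (1 + 1 / r) \<le> 1 / r" using r by (intro ln_add_one_self_le_self) auto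
  moreover have "ln (1 + 2 * t) \<le> 2 * L"
  proof -
    have "1 + 2 * t \<le> 2 + t\<^sup>2" using sum_power2_ge_zero[of "t - 1" 0] by (simp add: power2_eq_square algebra_simps)
    then have "ln (1 + 2 * t) \<le> ln (2 + t\<^sup>2)" using t by simp
    then show ?thesis by (simp add: L_def japan_def ln_sqrt add_pos_nonneg)
  qed
  ultimately have "r * (1 + u) \<le> r * (8 + 2 * L + 1 / r)" using u r by (intro mult_left_mono) auto
  also have "\<dots> = 8 * r + 2 * (r * L) + 1" using r by (simp add: algebra_simps)
  also have "\<dots> \<le> 24 * (japan r * L) + 2 * (japan r * L) + 3 * (japan r * L)"
    using mult_mono[OF japan_ge(2)[of r] L] mult_mono[OF japan_ge(1)[of r] L] mult_right_mono[OF japan_ge(2)[of r], of L] L r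
    by (intro add_mono) (auto simp: mult_ac)
  finally show ?thesis by (simp add: L_def)
qed

section \<open>Derivatives of \<open>Rtil\<close>\<close>

definition angle :: "real \<Rightarrow> real \<Rightarrow> real \<Rightarrow> real \<Rightarrow> real \<Rightarrow> real" where
  "angle m l t \<theta> a = Vk (kappa m a l) ((\<theta> + a * t) / pfun m a l)"

context
  fixes m l t :: real
  assumes m_pos: "0 < m" and l_pos: "0 < l"
begin

lemma kappa_bounds: "0 < a \<Longrightarrow> 0 < kappa m a l \<and> kappa m a l < 1"
  using kappa_pos[of l m a] kappa_less_1[of m l a] m_pos l_pos by simp

lemma
  assumes "0 < a" "0 < \<theta> + a * t"
  shows angle_pos: "0 < angle m l t \<theta> a"
    and sinh_minus_lin_angle: "sinh (angle m l t \<theta> a) - kappa m a l * angle m l t \<theta> a = (\<theta> + a * t) / pfun m a l"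
  using Vk_pos sinh_minus_lin_Vk kappa_bounds[OF assms(1)] pfun_pos[of m l a] m_pos l_pos assms
  by (auto simp: angle_def)

lemma Rtil_eq_angle:
  assumes "0 < a" "0 < \<theta> + a * t"
  shows "Rtil m t \<theta> a l = pfun m a l * (cosh (angle m l t \<theta> a) - kappa m a l)"
  using Hk_eq_cosh_Vk[of "kappa m a l" "(\<theta> + a * t) / pfun m a l"] kappa_bounds[OF assms(1)]
    pfun_pos[of m l a] m_pos l_pos assms
  by (simp add: Rtil_def Rfun_def angle_def algebra_simps)

lemma has_real_derivative_angle_theta:
  assumes "0 < a" "0 < \<theta> + a * t"
  defines "K \<equiv> kappa m a l" and "P \<equiv> pfun m a l" and "u \<equiv> angle m l t \<theta> a"
  shows "((\<lambda>\<theta>. angle m l t \<theta> a) has_real_derivative 1 / (P * E u K)) (at \<theta>)"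
proof -
  have "P > 0" using pfun_pos[of m l a] m_pos l_pos assms(1) by (simp add: P_def)
  have "((\<lambda>\<theta>. angle m l t \<theta> a) has_real_derivative (u * 0 + 1 / P) / E u K) (at \<theta>)"
    unfolding u_def K_def P_def
  proof (rule has_real_derivative_implicit_sinh[where S = "{\<theta>. 0 < \<theta> + a * t}"])
    show "((\<lambda>\<theta>. (\<theta> + a * t) / pfun m a l) has_real_derivative 1 / pfun m a l) (at \<theta>)"
      using \<open>P > 0\<close> unfolding P_def by (auto intro!: derivative_eq_intros)
    show "open {\<theta>. 0 < \<theta> + a * t}" by (intro open_Collect_less continuous_intros)
  qed (use sinh_minus_lin_angle kappa_bounds assms in auto)
  then show ?thesis using \<open>P > 0\<close> by simp
qed

lemma has_real_derivative_angle_a: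
  assumes "0 < a" "0 < \<theta> + a * t"
  defines "K \<equiv> kappa m a l" and "P \<equiv> pfun m a l" and "u \<equiv> angle m l t \<theta> a"
    and "T \<equiv> a * t / pfun m a l"
  shows "((\<lambda>a. angle m l t \<theta> a) has_real_derivative Da_u u K T / a) (at a)"
proof -
  have "P > 0" using pfun_pos[of m l a] m_pos l_pos assms(1) by (simp add: P_def)
  have dK: "((\<lambda>a. kappa m a l) has_real_derivative - K / a * (1 - K\<^sup>2)) (at a)"
    unfolding K_def using m_pos l_pos assms(1) by (intro has_real_derivative_kappa) auto
  have dP: "((\<lambda>a. pfun m a l) has_real_derivative - P / a * (1 + K\<^sup>2)) (at a)"
    unfolding K_def P_def using m_pos l_pos assms(1) by (intro has_real_derivative_pfun) auto
  have dc: "((\<lambda>a. (\<theta> + a * t) / pfun m a l) has_real_derivative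
      (t * P - (\<theta> + a * t) * (- P / a * (1 + K\<^sup>2))) / P\<^sup>2) (at a)"
    using \<open>P > 0\<close> dP unfolding P_def by (auto intro!: derivative_eq_intros simp: power2_eq_square)
  have "((\<lambda>a. angle m l t \<theta> a) has_real_derivative
      (u * (- K / a * (1 - K\<^sup>2)) + (t * P - (\<theta> + a * t) * (- P / a * (1 + K\<^sup>2))) / P\<^sup>2) / E u K) (at a)"
    unfolding u_def K_def
  proof (rule has_real_derivative_implicit_sinh[where S = "{a. 0 < a} \<inter> {a. 0 < \<theta> + a * t}"])
    show "open ({a. 0 < a} \<inter> {a. 0 < \<theta> + a * t})" by (intro open_Int open_Collect_less continuous_intros)
  qed (use sinh_minus_lin_angle kappa_bounds dK[unfolded K_def] dc assms in auto)
  moreover have "\<theta> = P * (sinh u - K * u) - a * t"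
    using sinh_minus_lin_angle[OF assms(1,2)] \<open>P > 0\<close> by (simp add: u_def K_def P_def field_simps)
  moreover have "cosh u - K \<noteq> 0"
    using cosh_real_ge_1[of u] kappa_bounds[OF assms(1)] by (simp add: K_def)
  moreover have "(u * (- K / a * (1 - K\<^sup>2)) + (t * P - (\<theta> + a * t) * (- P / a * (1 + K\<^sup>2))) / P\<^sup>2) / E u K
      = Da_u u K T / a"
    if "\<theta> = P * (sinh u - K * u) - a * t" "cosh u - K \<noteq> 0"
    using that(2) \<open>P > 0\<close> assms(1) unfolding T_def P_def[symmetric]
    by (simp only: that(1)) (simp add: field_simps power2_eq_square)
  ultimately show ?thesis by simp
qed

lemma has_real_derivative_Rtil_theta:
  assumes "0 < a" "0 < \<theta> + a * t"
  defines "K \<equiv> kappa m a l" and "u \<equiv> angle m l t \<theta> a"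
  shows "((\<lambda>\<theta>. Rtil m t \<theta> a l) has_real_derivative sinh u / E u K) (at \<theta>)"
proof (rule has_field_derivative_transform_within_open)
  have "pfun m a l > 0" using pfun_pos[of m l a] m_pos l_pos assms(1) by simp
  moreover have "cosh u - K \<noteq> 0"
    using cosh_real_ge_1[of u] kappa_bounds[OF assms(1)] by (simp add: K_def)
  ultimately show "((\<lambda>\<theta>. pfun m a l * (cosh (angle m l t \<theta> a) - kappa m a l)) has_real_derivative
      sinh u / E u K) (at \<theta>)"
    using has_real_derivative_angle_theta[OF assms(1,2)] unfolding u_def K_def
    by (auto intro!: derivative_eq_intros)
  show "open {\<theta>. 0 < \<theta> + a * t}" by (intro open_Collect_less continuous_intros)
qed (use assms Rtil_eq_angle in auto)

lemma has_real_derivative_Rtil_a: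
  assumes "0 < a" "0 < \<theta> + a * t"
  defines "K \<equiv> kappa m a l" and "P \<equiv> pfun m a l" and "u \<equiv> angle m l t \<theta> a"
    and "T \<equiv> a * t / pfun m a l"
  shows "((\<lambda>a. Rtil m t \<theta> a l) has_real_derivative
    t + P / a * Ra u K T) (at a)"
proof (rule has_field_derivative_transform_within_open)
  have "P > 0" using pfun_pos[of m l a] m_pos l_pos assms(1) by (simp add: P_def)
  have "cosh u - K \<noteq> 0"
    using cosh_real_ge_1[of u] kappa_bounds[OF assms(1)] by (simp add: K_def)
  have "((\<lambda>a. pfun m a l * (cosh (angle m l t \<theta> a) - kappa m a l)) has_real_derivative
      - P / a * (1 + K\<^sup>2) * E u K
      + (sinh u * (Da_u u K T / a) - - K / a * (1 - K\<^sup>2)) * P) (at a)"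
    using has_real_derivative_angle_a[OF assms(1,2)] has_real_derivative_kappa[of m l a]
      has_real_derivative_pfun[of m l a] m_pos l_pos assms(1)
    unfolding K_def P_def u_def T_def by (auto intro!: derivative_eq_intros)
  moreover have "- P / a * (1 + K\<^sup>2) * E u K
      + (sinh u * (Da_u u K T / a) - - K / a * (1 - K\<^sup>2)) * P
      = t + P / a * Ra u K T"
    unfolding Nk_eq cosh_minus_sinh[symmetric] using \<open>P > 0\<close> \<open>cosh u - K \<noteq> 0\<close> assms(1)
    by (simp add: T_def P_def[symmetric] field_simps power2_eq_square)
  ultimately show "((\<lambda>a. pfun m a l * (cosh (angle m l t \<theta> a) - kappa m a l)) has_real_derivative
      t + P / a * Ra u K T) (at a)" by simp
  show "open ({a. 0 < a} \<inter> {a. 0 < \<theta> + a * t})" by (intro open_Int open_Collect_less continuous_intros)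
qed (use assms Rtil_eq_angle in auto)

lemma has_real_derivative_Rtil_theta_theta:
  assumes "0 < a" "0 < \<theta> + a * t"
  defines "K \<equiv> kappa m a l" and "P \<equiv> pfun m a l" and "u \<equiv> angle m l t \<theta> a"
  shows "((\<lambda>\<theta>. deriv (\<lambda>\<theta>. Rtil m t \<theta> a l) \<theta>) has_real_derivative
    (1 - K * cosh u) / (P * E u K ^ 3)) (at \<theta>)"
proof (rule has_field_derivative_transform_within_open)
  have "P > 0" using pfun_pos[of m l a] m_pos l_pos assms(1) by (simp add: P_def)
  have "cosh u - K \<noteq> 0"
    using cosh_real_ge_1[of u] kappa_bounds[OF assms(1)] by (simp add: K_def)
  have d: "((\<lambda>\<theta>. sinh (angle m l t \<theta> a) / (cosh (angle m l t \<theta> a) - kappa m a l)) has_real_derivative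
      ((cosh u * (1 / (P * E u K))) * E u K - sinh u * (sinh u * (1 / (P * E u K))))
        / (E u K * E u K)) (at \<theta>)"
    using has_real_derivative_angle_theta[OF assms(1,2)] \<open>cosh u - K \<noteq> 0\<close>
    unfolding K_def P_def u_def by (auto intro!: derivative_eq_intros)
  have alg: "((c * (1 / (P * e))) * e - s * (s * (1 / (P * e)))) / (e * e) = (1 - K * c) / (P * e ^ 3)"
    if "s\<^sup>2 = c\<^sup>2 - 1" "c = e + K" "e \<noteq> 0" for c s e
    using that \<open>P > 0\<close> by (simp add: field_simps power2_eq_square power3_eq_cube) algebra
  from d show "((\<lambda>\<theta>. sinh (angle m l t \<theta> a) / (cosh (angle m l t \<theta> a) - kappa m a l))
      has_real_derivative (1 - K * cosh u) / (P * E u K ^ 3)) (at \<theta>)"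
    by (rule DERIV_cong) (rule alg; use sinh_square_eq[of u] \<open>cosh u - K \<noteq> 0\<close> in simp)
  show "open {\<theta>. 0 < \<theta> + a * t}" by (intro open_Collect_less continuous_intros)
qed (use assms DERIV_imp_deriv[OF has_real_derivative_Rtil_theta] in auto)

lemma has_real_derivative_Rtil_a_theta:
  assumes "0 < a" "0 < \<theta> + a * t"
  defines "K \<equiv> kappa m a l" and "P \<equiv> pfun m a l" and "u \<equiv> angle m l t \<theta> a"
    and "T \<equiv> a * t / pfun m a l"
  shows "((\<lambda>a. deriv (\<lambda>\<theta>. Rtil m t \<theta> a l) \<theta>) has_real_derivative
    ((1 - K * cosh u) * (T + W u K) - K * (1 - K\<^sup>2) * sinh u * E u K) / (a * E u K ^ 3)) (at a)"
proof (rule has_field_derivative_transform_within_open)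
  have "cosh u - K \<noteq> 0"
    using cosh_real_ge_1[of u] kappa_bounds[OF assms(1)] by (simp add: K_def)
  have d: "((\<lambda>a. sinh (angle m l t \<theta> a) / (cosh (angle m l t \<theta> a) - kappa m a l)) has_real_derivative
      ((cosh u * ((T + W u K) / E u K / a)) * E u K - sinh u * (sinh u * ((T + W u K) / E u K / a) - - K / a * (1 - K\<^sup>2)))
        / (E u K * E u K)) (at a)"
    using has_real_derivative_angle_a[OF assms(1,2)] has_real_derivative_kappa[of m l a]
      \<open>cosh u - K \<noteq> 0\<close> m_pos l_pos assms(1)
    unfolding K_def P_def u_def T_def by (auto intro!: derivative_eq_intros)
  have alg: "((c * ((T + w) / e / a)) * e - s * (s * ((T + w) / e / a) - - K / a * (1 - K\<^sup>2)))
        / (e * e) = ((1 - K * c) * (T + w) - K * (1 - K\<^sup>2) * s * e) / (a * e ^ 3)"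
    if "s\<^sup>2 = c\<^sup>2 - 1" "c = e + K" "e \<noteq> 0" for c s e w
    using that assms(1) by (simp add: field_simps power2_eq_square power3_eq_cube) algebra
  from d show "((\<lambda>a. sinh (angle m l t \<theta> a) / (cosh (angle m l t \<theta> a) - kappa m a l)) has_real_derivative
      ((1 - K * cosh u) * (T + W u K) - K * (1 - K\<^sup>2) * sinh u * E u K) / (a * E u K ^ 3)) (at a)"
    by (rule DERIV_cong) (rule alg; use sinh_square_eq[of u] \<open>cosh u - K \<noteq> 0\<close> in simp)
  show "open ({a. 0 < a} \<inter> {a. 0 < \<theta> + a * t})" by (intro open_Int open_Collect_less continuous_intros)
qed (use assms DERIV_imp_deriv[OF has_real_derivative_Rtil_theta] in auto)

lemma has_real_derivative_Ra_parts:
  assumes "0 < a" "0 < \<theta> + a * t"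
  defines "K \<equiv> kappa m a l" and "P \<equiv> pfun m a l" and "u \<equiv> angle m l t \<theta> a"
    and "T \<equiv> a * t / pfun m a l"
  shows "((\<lambda>a. a * t / pfun m a l * (kappa m a l - exp (- angle m l t \<theta> a)) + Nk (kappa m a l) (angle m l t \<theta> a))
      has_real_derivative Da_Ra_num u K T / a) (at a)"
    and "((\<lambda>a. cosh (angle m l t \<theta> a) - kappa m a l) has_real_derivative Da_E u K T / a) (at a)"
proof -
  have "P > 0" using pfun_pos[of m l a] m_pos l_pos assms(1) by (simp add: P_def)
  have E_nz: "cosh u - K \<noteq> 0"
    using cosh_real_ge_1[of u] kappa_bounds[OF assms(1)] by (simp add: K_def)
  have dK: "((\<lambda>a. kappa m a l) has_real_derivative - K / a * (1 - K\<^sup>2)) (at a)"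
    unfolding K_def using m_pos l_pos assms(1) by (intro has_real_derivative_kappa) auto
  have dP: "((\<lambda>a. pfun m a l) has_real_derivative - P / a * (1 + K\<^sup>2)) (at a)"
    unfolding K_def P_def using m_pos l_pos assms(1) by (intro has_real_derivative_pfun) auto
  note du = has_real_derivative_angle_a[OF assms(1,2), folded K_def u_def T_def]
  have dT: "((\<lambda>a. a * t / pfun m a l) has_real_derivative T * (2 + K\<^sup>2) / a) (at a)"
    using dP \<open>P > 0\<close> assms(1) unfolding P_def T_def
    by (auto intro!: derivative_eq_intros simp: field_simps power2_eq_square)
  have dexp: "((\<lambda>a. exp (- angle m l t \<theta> a)) has_real_derivative - exp (-u) * (Da_u u K T / a)) (at a)"
    using du unfolding u_def by (auto intro!: derivative_eq_intros)
  have alg: "T * (2 + k\<^sup>2) / a * (k - e) + (- k / a * (1 - k\<^sup>2) - - e * (d / a)) * T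
      + (nk * (- k / a * (1 - k\<^sup>2)) + nu * (d / a))
      = ((T * e + nu) * d - (T + nk) * (k * (1 - k\<^sup>2)) + (2 + k\<^sup>2) * T * (k - e)) / a" for T k e d nk nu
    using assms(1) by (simp add: field_simps)
  from DERIV_add[OF DERIV_mult[OF dT DERIV_diff[OF dK dexp]] has_real_derivative_Nk[OF dK du]]
  show "((\<lambda>a. a * t / pfun m a l * (kappa m a l - exp (- angle m l t \<theta> a)) + Nk (kappa m a l) (angle m l t \<theta> a))
      has_real_derivative Da_Ra_num u K T / a) (at a)"
    unfolding K_def u_def T_def by (rule DERIV_cong) (rule alg)
  show "((\<lambda>a. cosh (angle m l t \<theta> a) - kappa m a l) has_real_derivative Da_E u K T / a) (at a)"
    using du dK E_nz assms(1) unfolding u_def K_def by (auto intro!: derivative_eq_intros simp: field_simps)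
qed

lemma has_real_derivative_Rtil_a_a:
  assumes "0 < a" "0 < \<theta> + a * t"
  defines "K \<equiv> kappa m a l" and "P \<equiv> pfun m a l" and "u \<equiv> angle m l t \<theta> a"
    and "T \<equiv> a * t / pfun m a l"
  shows "((\<lambda>a. deriv (\<lambda>a. Rtil m t \<theta> a l) a) has_real_derivative P / a\<^sup>2 * Raa u K T) (at a)"
proof (rule has_field_derivative_transform_within_open)
  have E_nz: "cosh (angle m l t \<theta> a) - kappa m a l \<noteq> 0"
    using cosh_real_ge_1[of "angle m l t \<theta> a"] kappa_bounds[OF assms(1)] by simp
  have dQ: "((\<lambda>a. pfun m a l / a) has_real_derivative - P / a\<^sup>2 * (2 + K\<^sup>2)) (at a)"
    using has_real_derivative_pfun[of m l a] m_pos l_pos assms(1) unfolding P_def K_def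
    by (auto intro!: derivative_eq_intros simp: field_simps power2_eq_square)
  have alg: "0 + (- p / a\<^sup>2 * (2 + k\<^sup>2) * (n / e) + ((dn / a * e - n * (de / a)) / (e * e)) * (p / a))
      = p / a\<^sup>2 * (dn / e - (2 + k\<^sup>2 + de / e) * (n / e))" if "e \<noteq> 0" for p k n e dn de
    using that assms(1) by (simp add: field_simps power2_eq_square)
  from DERIV_add[OF DERIV_const[of t]
      DERIV_mult[OF dQ DERIV_divide[OF has_real_derivative_Ra_parts[OF assms(1,2)] E_nz]]]
  show "((\<lambda>a. t + pfun m a l / a * Ra (angle m l t \<theta> a) (kappa m a l) (a * t / pfun m a l))
      has_real_derivative P / a\<^sup>2 * Raa u K T) (at a)"
    unfolding K_def u_def T_def P_def by (rule DERIV_cong) (rule alg[OF E_nz])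
  show "open ({a. 0 < a} \<inter> {a. 0 < \<theta> + a * t})" by (intro open_Int open_Collect_less continuous_intros)
qed (use assms DERIV_imp_deriv[OF has_real_derivative_Rtil_a] in auto)

section \<open>Bounds on \<open>Rtil\<close> and its derivatives\<close>

context
  fixes \<theta> a :: real
  assumes t_pos: "0 < t" and a_pos: "0 < a" and theta_le: "\<bar>\<theta>\<bar> \<le> a * t / 2"
begin

lemma theta_plus_bounds: "a * t / 2 \<le> \<theta> + a * t" "\<theta> + a * t \<le> 3 / 2 * (a * t)" "0 < \<theta> + a * t"
  using theta_le mult_pos_pos[OF a_pos t_pos] by (auto simp: abs_le_iff)

lemma angle_bounds:
  defines "K \<equiv> kappa m a l" and "P \<equiv> pfun m a l" and "u \<equiv> angle m l t \<theta> a"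
    and "T \<equiv> a * t / pfun m a l"
  shows "0 < u" "0 < K" "K < 1" "0 < P" "0 < T" "T \<le> 2 * Y u K" "Y u K \<le> 3 / 2 * T"
    and "P * Y u K = \<theta> + a * t"
proof -
  show "0 < u" "0 < K" "K < 1" "0 < P"
    using angle_pos kappa_bounds pfun_pos[of m l a] m_pos l_pos a_pos theta_plus_bounds(3)
    by (auto simp: u_def K_def P_def)
  then show "0 < T" using a_pos t_pos by (simp add: T_def P_def)
  show Y: "P * Y u K = \<theta> + a * t"
    using sinh_minus_lin_angle[OF a_pos theta_plus_bounds(3)] \<open>0 < P\<close> by (simp add: u_def K_def P_def)
  have "P * T = a * t" using \<open>0 < P\<close> by (simp add: T_def P_def)
  moreover have "P * (2 * Y u K) = 2 * (\<theta> + a * t)" "P * (3 / 2 * T) = 3 / 2 * (a * t)"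
    using Y \<open>P * T = a * t\<close> by (simp_all only: mult.left_commute[of P])
  ultimately have "P * T \<le> P * (2 * Y u K)" "P * Y u K \<le> P * (3 / 2 * T)"
    using Y theta_plus_bounds(1,2) by linarith+
  then show "T \<le> 2 * Y u K" "Y u K \<le> 3 / 2 * T"
    using mult_le_cancel_left_pos[OF \<open>0 < P\<close>] by blast+
qed

lemma pfun_angle_le_japan_ln:
  "pfun m a l / a * (1 + angle m l t \<theta> a) \<le> 29 * (japan (pfun m a l / a) * ln (japan t))"
proof -
  define K where "K = kappa m a l"
  define P where "P = pfun m a l"
  define u where "u = angle m l t \<theta> a"
  define T where "T = a * t / pfun m a l"
  note r = angle_bounds[folded T_def, folded K_def P_def u_def]
  have "T = t / (P / a)" using a_pos by (simp add: T_def P_def)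
  then have "Y u K \<le> 2 * (t / (P / a))" using r(5,7) by linarith
  then show ?thesis
    using r(4) a_pos t_pos u_le_7_plus_ln[OF r(1-3)] less_imp_le[OF Y_pos[OF r(1-3)]]
    unfolding P_def[symmetric] u_def[symmetric] by (intro scaled_log_le_japan_ln) auto
qed

lemma Rtil_bounds:
  shows "a * t \<le> 2 * Rtil m t \<theta> a l" and "Rtil m t \<theta> a l \<le> (exp 7 + 6) * (pfun m a l + a * t)"
proof -
  define K where "K = kappa m a l"
  define P where "P = pfun m a l"
  define u where "u = angle m l t \<theta> a"
  define T where "T = a * t / pfun m a l"
  note r = angle_bounds[folded T_def, folded K_def P_def u_def]
  have R: "Rtil m t \<theta> a l = P * E u K"
    using Rtil_eq_angle[OF a_pos theta_plus_bounds(3)] by (simp add: K_def P_def u_def)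
  have "P * Y u K \<le> P * E u K" using Y_le_E[OF r(1-3)] r(4) by simp
  then show "a * t \<le> 2 * Rtil m t \<theta> a l" using R r(8) theta_plus_bounds(1) by linarith
  have "P * E u K \<le> P * (exp 7 + 4 * Y u K)"
    using cosh_le_exp_7_plus_Y[OF r(1-3)] r(2,4) by (intro mult_left_mono) auto
  also have "\<dots> = exp 7 * P + 4 * (\<theta> + a * t)" using r(8) by (simp add: algebra_simps)
  also have "\<dots> \<le> exp 7 * P + 6 * (a * t) + (6 * P + exp 7 * (a * t))"
    using theta_plus_bounds(2) r(4) a_pos t_pos by (simp add: add_increasing2)
  also have "\<dots> = (exp 7 + 6) * (P + a * t)" by (simp add: algebra_simps)
  finally show "Rtil m t \<theta> a l \<le> (exp 7 + 6) * (pfun m a l + a * t)" using R by (simp add: P_def)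
qed

lemma Rtil_first_derivative_bounds:
  shows "\<bar>deriv (\<lambda>\<theta>. Rtil m t \<theta> a l) \<theta> - 1\<bar> \<le> 2 * (pfun m a l / (a * t))"
    and "\<bar>deriv (\<lambda>a. Rtil m t \<theta> a l) a - t\<bar> \<le> 435 * (japan (pfun m a l / a) * ln (japan t))"
proof -
  define K where "K = kappa m a l"
  define P where "P = pfun m a l"
  define u where "u = angle m l t \<theta> a"
  define T where "T = a * t / pfun m a l"
  note r = angle_bounds[folded T_def, folded K_def P_def u_def]
  have E_pos: "0 < E u K" by (rule E_pos[OF r(1-3)])
  have "sinh u / E u K - 1 = (K - exp (-u)) / E u K"
    using E_pos by (simp add: field_simps cosh_minus_sinh[symmetric])
  moreover have "\<bar>K - exp (-u)\<bar> / E u K \<le> 2 / T"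
    using abs_K_minus_exp_T_le[OF r(1-3) less_imp_le[OF r(5)] r(6)] E_pos r(5)
    by (simp add: divide_simps mult.commute)
  moreover have "2 / T = 2 * (P / (a * t))" by (simp add: T_def P_def)
  moreover have "deriv (\<lambda>\<theta>. Rtil m t \<theta> a l) \<theta> = sinh u / E u K"
    using DERIV_imp_deriv[OF has_real_derivative_Rtil_theta[OF a_pos theta_plus_bounds(3)]]
    by (simp add: u_def K_def)
  ultimately show "\<bar>deriv (\<lambda>\<theta>. Rtil m t \<theta> a l) \<theta> - 1\<bar> \<le> 2 * (pfun m a l / (a * t))"
    using E_pos by (simp add: P_def)
  have da: "deriv (\<lambda>a. Rtil m t \<theta> a l) a - t = P / a * Ra u K T"
    using DERIV_imp_deriv[OF has_real_derivative_Rtil_a[OF a_pos theta_plus_bounds(3)]]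
    by (simp add: u_def K_def P_def T_def)
  note Ra = abs_Ra_le[OF r(1-3) less_imp_le[OF r(5)] r(6)]
  have "\<bar>deriv (\<lambda>a. Rtil m t \<theta> a l) a - t\<bar> = P / a * \<bar>Ra u K T\<bar>"
    unfolding da abs_mult using r(4) a_pos by simp
  also have "\<dots> \<le> P / a * (15 * (1 + u))" using Ra r(4) a_pos by (intro mult_left_mono) auto
  also have "\<dots> = 15 * (P / a * (1 + u))" by simp
  also have "\<dots> \<le> 435 * (japan (P / a) * ln (japan t))"
    using pfun_angle_le_japan_ln by (simp add: P_def u_def)
  finally show "\<bar>deriv (\<lambda>a. Rtil m t \<theta> a l) a - t\<bar> \<le> 435 * (japan (pfun m a l / a) * ln (japan t))"
    by (simp add: P_def)
qed

lemma Rtil_theta_second_derivative_bounds: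
  shows "\<bar>deriv (\<lambda>\<theta>. deriv (\<lambda>\<theta>. Rtil m t \<theta> a l) \<theta>) \<theta>\<bar> \<le> 4 * (pfun m a l / (a\<^sup>2 * t\<^sup>2))"
    and "\<bar>deriv (\<lambda>a. deriv (\<lambda>\<theta>. Rtil m t \<theta> a l) \<theta>) a\<bar> \<le> 12 * (pfun m a l / (a\<^sup>2 * t))"
proof -
  define K where "K = kappa m a l"
  define P where "P = pfun m a l"
  define u where "u = angle m l t \<theta> a"
  define T where "T = a * t / pfun m a l"
  note r = angle_bounds[folded T_def, folded K_def P_def u_def]
  note est = r(1-3) less_imp_le[OF r(5)] r(6)
  have E3: "0 < E u K ^ 3" using E_pos[OF r(1-3)] by simp
  have PT: "a * t = P * T" using r(4) by (simp add: T_def P_def)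
  have "\<bar>(1 - K * cosh u) / (P * E u K ^ 3)\<bar> \<le> 4 / (P * T\<^sup>2)"
    using T_sq_abs_1_minus_K_cosh_le[OF est] r(4,5) E3
    by (simp add: abs_divide abs_mult divide_simps) (simp add: algebra_simps)
  moreover have "4 / (P * T\<^sup>2) = 4 * (P / (a\<^sup>2 * t\<^sup>2))"
    using r(4,5) unfolding power_mult_distrib[symmetric] PT by (simp add: power2_eq_square)
  ultimately show "\<bar>deriv (\<lambda>\<theta>. deriv (\<lambda>\<theta>. Rtil m t \<theta> a l) \<theta>) \<theta>\<bar> \<le> 4 * (pfun m a l / (a\<^sup>2 * t\<^sup>2))"
    using DERIV_imp_deriv[OF has_real_derivative_Rtil_theta_theta[OF a_pos theta_plus_bounds(3)]]
    by (simp add: u_def K_def P_def)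
  have "\<bar>((1 - K * cosh u) * (T + W u K) - K * (1 - K\<^sup>2) * sinh u * E u K) / (a * E u K ^ 3)\<bar> \<le> 12 / (a * T)"
    using T_abs_mixed_le[OF est] a_pos r(5) E3
    by (simp add: abs_divide abs_mult divide_simps) (simp add: algebra_simps)
  moreover have "12 / (a * T) = 12 * (P / (a\<^sup>2 * t))"
    using r(4) a_pos t_pos by (simp add: T_def P_def power2_eq_square)
  ultimately show "\<bar>deriv (\<lambda>a. deriv (\<lambda>\<theta>. Rtil m t \<theta> a l) \<theta>) a\<bar> \<le> 12 * (pfun m a l / (a\<^sup>2 * t))"
    using DERIV_imp_deriv[OF has_real_derivative_Rtil_a_theta[OF a_pos theta_plus_bounds(3)]]
    by (simp add: u_def K_def P_def T_def power2_eq_square)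
qed

lemma Rtil_a_a_bound:
  "\<bar>deriv (\<lambda>a. deriv (\<lambda>a. Rtil m t \<theta> a l) a) a\<bar> \<le> 13195 * (1 / a * japan (pfun m a l / a) * ln (japan t))"
proof -
  define K where "K = kappa m a l"
  define P where "P = pfun m a l"
  define u where "u = angle m l t \<theta> a"
  define T where "T = a * t / pfun m a l"
  note r = angle_bounds[folded T_def, folded K_def P_def u_def]
  note est = r(1-3) less_imp_le[OF r(5)] r(6)
  have "\<bar>deriv (\<lambda>a. deriv (\<lambda>a. Rtil m t \<theta> a l) a) a\<bar>
      = 1 / a * (P / a * \<bar>Raa u K T\<bar>)"
    using DERIV_imp_deriv[OF has_real_derivative_Rtil_a_a[OF a_pos theta_plus_bounds(3)]] r(4) a_pos
    by (simp add: u_def K_def P_def T_def abs_mult power2_eq_square)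
  also have "\<dots> \<le> 1 / a * (P / a * (455 * (1 + u)))"
    using abs_Raa_le[OF est] r(4) a_pos by (intro mult_left_mono) auto
  also have "\<dots> = 1 / a * (455 * (P / a * (1 + u)))" by simp
  also have "\<dots> \<le> 1 / a * (455 * (29 * (japan (P / a) * ln (japan t))))"
    using pfun_angle_le_japan_ln a_pos unfolding P_def u_def by (intro mult_left_mono) auto
  finally show ?thesis by (simp add: P_def)
qed

lemma Rtil_estimates:
  defines "C \<equiv> exp 7 + 13195" and "p \<equiv> pfun m a l"
  shows "a * t \<le> C * Rtil m t \<theta> a l" and "Rtil m t \<theta> a l \<le> C * (p + a * t)"
    and "\<bar>deriv (\<lambda>\<theta>. Rtil m t \<theta> a l) \<theta> - 1\<bar> \<le> C * (p / (a * t))"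
    and "\<bar>deriv (\<lambda>a. Rtil m t \<theta> a l) a - t\<bar> \<le> C * (japan (p / a) * ln (japan t))"
    and "\<bar>deriv (\<lambda>\<theta>. deriv (\<lambda>\<theta>. Rtil m t \<theta> a l) \<theta>) \<theta>\<bar> \<le> C * (p / (a\<^sup>2 * t\<^sup>2))"
    and "\<bar>deriv (\<lambda>a. deriv (\<lambda>\<theta>. Rtil m t \<theta> a l) \<theta>) a\<bar> \<le> C * (p / (a\<^sup>2 * t))"
    and "\<bar>deriv (\<lambda>a. deriv (\<lambda>a. Rtil m t \<theta> a l) a) a\<bar> \<le> C * (1 / a * japan (p / a) * ln (japan t))"
proof -
  have weaken: "x \<le> C * y" if "x \<le> c * y" "c \<le> C" "0 \<le> y" for x c y
    using that by (meson mult_right_mono order_trans)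
  have C: "2 \<le> C" "exp 7 + 6 \<le> C" "435 \<le> C" "4 \<le> C" "12 \<le> C" "13195 \<le> C"
    using exp_gt_zero[of 7] by (simp_all add: C_def)
  have "0 < p" using pfun_pos[of m l a] m_pos l_pos a_pos by (simp add: p_def)
  moreover have "0 < japan (p / a) * ln (japan t)"
    using japan_ge(1)[of "p / a"] ln_japan_ge[of t] by (intro mult_pos_pos) linarith+
  moreover have "0 \<le> Rtil m t \<theta> a l" using Rtil_bounds(1) mult_pos_pos[OF a_pos t_pos] by linarith
  ultimately have nonneg: "0 \<le> Rtil m t \<theta> a l" "0 \<le> p + a * t" "0 \<le> p / (a * t)"
    "0 \<le> japan (p / a) * ln (japan t)" "0 \<le> p / (a\<^sup>2 * t\<^sup>2)" "0 \<le> p / (a\<^sup>2 * t)"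
    "0 \<le> 1 / a * japan (p / a) * ln (japan t)"
    using a_pos t_pos by auto
  show "a * t \<le> C * Rtil m t \<theta> a l" "Rtil m t \<theta> a l \<le> C * (p + a * t)"
    "\<bar>deriv (\<lambda>\<theta>. Rtil m t \<theta> a l) \<theta> - 1\<bar> \<le> C * (p / (a * t))"
    "\<bar>deriv (\<lambda>a. Rtil m t \<theta> a l) a - t\<bar> \<le> C * (japan (p / a) * ln (japan t))"
    "\<bar>deriv (\<lambda>\<theta>. deriv (\<lambda>\<theta>. Rtil m t \<theta> a l) \<theta>) \<theta>\<bar> \<le> C * (p / (a\<^sup>2 * t\<^sup>2))"
    "\<bar>deriv (\<lambda>a. deriv (\<lambda>\<theta>. Rtil m t \<theta> a l) \<theta>) a\<bar> \<le> C * (p / (a\<^sup>2 * t))"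
    "\<bar>deriv (\<lambda>a. deriv (\<lambda>a. Rtil m t \<theta> a l) a) a\<bar> \<le> C * (1 / a * japan (p / a) * ln (japan t))"
    using weaken[OF Rtil_bounds(1) C(1)] weaken[OF Rtil_bounds(2) C(2)]
      weaken[OF Rtil_first_derivative_bounds(1) C(1)] weaken[OF Rtil_first_derivative_bounds(2) C(3)]
      weaken[OF Rtil_theta_second_derivative_bounds(1) C(4)] weaken[OF Rtil_theta_second_derivative_bounds(2) C(5)]
      weaken[OF Rtil_a_a_bound C(6)] nonneg
    by (simp_all add: p_def)
qed

end

end

theorem lemma2p18:
  fixes m :: real
  assumes "m > 0"
  shows "\<exists>C>0. \<forall>t \<theta> a l. t > 0 \<and> a > 0 \<and> l > 0 \<and> \<bar>\<theta>\<bar> \<le> a * t / 2 \<longrightarrow>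
    (let p = pfun m a l;
         Rt = (\<lambda>\<theta>' a'. Rtil m t \<theta>' a' l)
     in a * t \<le> C * Rt \<theta> a
      \<and> Rt \<theta> a \<le> C * (p + a * t)
      \<and> \<bar>deriv (\<lambda>\<theta>'. Rt \<theta>' a) \<theta> - 1\<bar> \<le> C * (p / (a * t))
      \<and> \<bar>deriv (\<lambda>a'. Rt \<theta> a') a - t\<bar> \<le> C * (japan (p / a) * ln (japan t))
      \<and> \<bar>deriv (\<lambda>\<theta>''. deriv (\<lambda>\<theta>'. Rt \<theta>' a) \<theta>'') \<theta>\<bar> \<le> C * (p / (a\<^sup>2 * t\<^sup>2))
      \<and> \<bar>deriv (\<lambda>a'. deriv (\<lambda>\<theta>'. Rt \<theta>' a') \<theta>) a\<bar> \<le> C * (p / (a\<^sup>2 * t))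
      \<and> \<bar>deriv (\<lambda>a''. deriv (\<lambda>a'. Rt \<theta> a') a'') a\<bar> \<le> C * ((1 / a) * japan (p / a) * ln (japan t)))"
  using Rtil_estimates[OF assms] by (auto simp: Let_def intro!: exI[of _ "exp 7 + 13195"] add_pos_pos)

end
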